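(* Let $\mathcal P_X,\mathcal P_Y$ be probability measures on $(E,\mathcal E)$ with $\mathcal P_Y\ll\mathcal P_X$, $L=d\mathcal P_Y/d\mathcal P_X$, and assume $L(\mathbf Z)$ has a continuous distribution under $\mathbf Z\sim\mathcal P_X$. Let $\theta(z)=L(z)/(1+L(z))$. Let $\mathbf Z_X,\mathbf Z_X'\sim\mathcal P_X$ and $\mathbf Z_Y\sim\mathcal P_Y$ be independent, and set $\delta:=\mathbb E|L(\mathbf Z_X)-L(\mathbf Z_X')|$ and $\mu:=\mathbb P(\theta(\mathbf Z_X)<\theta(\mathbf Z_Y))$. Then $\delta=4\mu-2$, i.e. $\mu=\tfrac12+\tfrac{\delta}{4}$.
   Context: $\theta$ is the population conditional probability of label $1$ for a sample drawn with equal weight from $\mathcal P_X$ (label 0) and $\mathcal P_Y$ (label 1); note $\theta/(1-\theta)=L$ and $\theta$ is a strictly increasing function of $L$. *)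

theory Defs
  imports "HOL-Probability.Probability"
begin

definition theta :: "('a \<Rightarrow> real) \<Rightarrow> 'a \<Rightarrow> real" where
  "theta L z = L z / (1 + L z)"

end

theory Submission
  imports Defs
begin

text \<open>Since \<open>\<theta>\<close> is increasing in \<open>L\<close>, the event \<open>\<theta>(Z\<^sub>X) < \<theta>(Z\<^sub>Y)\<close> is \<open>L(Z\<^sub>X) < L(Z\<^sub>Y)\<close>, and changing
  measure from \<open>P\<^sub>Y\<close> to \<open>P\<^sub>X\<close> gives \<open>\<mu> = E[L(Z') 1{L(Z) < L(Z')}]\<close> for independent \<open>Z, Z' \<sim> P\<^sub>X\<close>.
  Split \<open>|L(Z) - L(Z')|\<close> according to which value is larger. Exchanging \<open>Z\<close> and \<open>Z'\<close> maps one
  half onto the other, so \<open>\<delta> = 2 E[(L(Z') - L(Z)) 1{L(Z) < L(Z')}]\<close>; by the same symmetry and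
  because ties are null, \<open>E[L(Z) 1{L(Z) < L(Z')}] = E L - \<mu> = 1 - \<mu>\<close>, whence \<open>\<delta> = 4\<mu> - 2\<close>.\<close>

lemma theta_less_theta_iff:
  assumes "0 \<le> L x" and "0 \<le> L y"
  shows "theta L x < theta L y \<longleftrightarrow> L x < L y"
  unfolding theta_def using assms by (simp add: field_simps add_pos_nonneg)

lemma integrable_integral_prob_density:
  fixes f :: "'a \<Rightarrow> real"
  assumes "prob_space (density M f)"
    and [measurable]: "f \<in> borel_measurable M" and nonneg: "AE x in M. 0 \<le> f x"
  shows "integrable M f" and "integral\<^sup>L M f = 1"
proof -
  interpret prob_space "density M f" by fact
  show "integrable M f"
    using integrable_density[of "\<lambda>_. 1::real" M f] nonneg by simp
  show "integral\<^sup>L M f = 1"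
    using integral_density[of "\<lambda>_. 1::real" M f] nonneg prob_space by simp
qed

lemma (in sigma_finite_measure) integral_pair_swap:
  fixes h :: "'a \<times> 'a \<Rightarrow> real"
  assumes "h \<in> borel_measurable (M \<Otimes>\<^sub>M M)"
  shows "(\<integral>p. h (snd p, fst p) \<partial>(M \<Otimes>\<^sub>M M)) = integral\<^sup>L (M \<Otimes>\<^sub>M M) h"
proof -
  interpret pair_sigma_finite M M ..
  show ?thesis
    using integral_product_swap[OF assms] by (simp add: case_prod_beta')
qed

lemma (in pair_sigma_finite) AE_pair_neq:
  fixes f :: "'a \<Rightarrow> real" and g :: "'b \<Rightarrow> real"
  assumes [measurable]: "f \<in> borel_measurable M1" "g \<in> borel_measurable M2"
    and level_null: "\<And>r. emeasure M2 {y \<in> space M2. g y = r} = 0"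
  shows "AE p in M1 \<Otimes>\<^sub>M M2. f (fst p) \<noteq> g (snd p)"
proof (rule AE_pair_measure)
  show "{p \<in> space (M1 \<Otimes>\<^sub>M M2). f (fst p) \<noteq> g (snd p)} \<in> sets (M1 \<Otimes>\<^sub>M M2)"
    by measurable
  show "AE x in M1. AE y in M2. f (fst (x, y)) \<noteq> g (snd (x, y))"
  proof (rule AE_I2)
    fix x
    show "AE y in M2. f (fst (x, y)) \<noteq> g (snd (x, y))"
      by (rule AE_I[OF _ level_null[of "f x"]]) auto
  qed
qed

lemma measure_pair_density_snd:
  fixes g :: "'b \<Rightarrow> real"
  assumes "sigma_finite_measure M2" and "sigma_finite_measure (density M2 g)"
    and [measurable]: "g \<in> borel_measurable M2" and nonneg: "\<And>y. y \<in> space M2 \<Longrightarrow> 0 \<le> g y"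
    and A[measurable]: "A \<in> sets (M1 \<Otimes>\<^sub>M M2)"
  shows "measure (M1 \<Otimes>\<^sub>M density M2 g) A = (\<integral>p. g (snd p) * indicator A p \<partial>(M1 \<Otimes>\<^sub>M M2))"
proof -
  have "M1 \<Otimes>\<^sub>M density M2 g = density (M1 \<Otimes>\<^sub>M M2) (\<lambda>p. g (snd p))"
    using pair_measure_density[of "\<lambda>_. 1" M1 g M2] assms(1,2)
    by (simp add: density_1 case_prod_beta')
  then have "measure (M1 \<Otimes>\<^sub>M density M2 g) A
      = (\<integral>p. indicator A p \<partial>density (M1 \<Otimes>\<^sub>M M2) (\<lambda>p. g (snd p)))"
    using sets.sets_into_space[OF A] by (simp add: Int_absorb2)
  also have "\<dots> = (\<integral>p. g (snd p) * indicator A p \<partial>(M1 \<Otimes>\<^sub>M M2))"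
    by (subst integral_density) (auto simp: space_pair_measure nonneg)
  finally show ?thesis .
qed

lemma (in prob_space) integral_pair_fst:
  fixes f :: "'b \<Rightarrow> real"
  assumes "integrable N f"
  shows "integrable (N \<Otimes>\<^sub>M M) (\<lambda>p. f (fst p))"
    and "(\<integral>p. f (fst p) \<partial>(N \<Otimes>\<^sub>M M)) = integral\<^sup>L N f"
proof -
  have [measurable]: "f \<in> borel_measurable N"
    using assms by simp
  show "integrable (N \<Otimes>\<^sub>M M) (\<lambda>p. f (fst p))"
    using assms integrable_distr_eq[of fst "N \<Otimes>\<^sub>M M" N f] by (simp add: distr_pair_fst)
  show "(\<integral>p. f (fst p) \<partial>(N \<Otimes>\<^sub>M M)) = integral\<^sup>L N f"
    using integral_distr[of fst "N \<Otimes>\<^sub>M M" N f] by (simp add: distr_pair_fst)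
qed

lemma (in prob_space) integral_abs_diff_pair:
  fixes f :: "'a \<Rightarrow> real"
  assumes int: "integrable M f"
    and ties: "AE p in M \<Otimes>\<^sub>M M. f (fst p) \<noteq> f (snd p)"
  defines "A \<equiv> {p \<in> space (M \<Otimes>\<^sub>M M). f (fst p) < f (snd p)}"
  shows "(\<integral>p. \<bar>f (fst p) - f (snd p)\<bar> \<partial>(M \<Otimes>\<^sub>M M))
    = 4 * (\<integral>p. f (snd p) * indicator A p \<partial>(M \<Otimes>\<^sub>M M)) - 2 * integral\<^sup>L M f"
proof -
  interpret Q: pair_sigma_finite M M ..
  let ?Q = "M \<Otimes>\<^sub>M M"
  define B where "B = {p \<in> space ?Q. f (snd p) < f (fst p)}"
  have [measurable]: "f \<in> borel_measurable M"
    using int by simp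
  have [measurable]: "A \<in> sets ?Q" "B \<in> sets ?Q"
    unfolding A_def B_def by measurable
  have swap_B: "indicator B (snd p, fst p) = indicator A p" for p :: "'a \<times> 'a"
    by (cases p) (auto simp: A_def B_def space_pair_measure indicator_def)
  have int_fst: "integrable ?Q (\<lambda>p. f (fst p))"
    and integral_fst: "(\<integral>p. f (fst p) \<partial>?Q) = integral\<^sup>L M f"
    using integral_pair_fst[OF int] by auto
  have int_snd: "integrable ?Q (\<lambda>p. f (snd p))"
    using Q.integrable_product_swap[OF int_fst] by (simp add: case_prod_beta')
  have integral_snd: "(\<integral>p. f (snd p) \<partial>?Q) = integral\<^sup>L M f"
    using integral_pair_swap[of "\<lambda>p. f (fst p)"] integral_fst by simp
  let ?a = "\<lambda>C p. f (fst p) * indicator C p" and ?b = "\<lambda>C p. f (snd p) * indicator C p"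
  have int_ab: "integrable ?Q (?a C)" "integrable ?Q (?b C)" if "C \<in> sets ?Q" for C
    using that int_fst int_snd by (auto intro: integrable_real_mult_indicator)
  have "(\<integral>p. \<bar>f (fst p) - f (snd p)\<bar> \<partial>?Q)
      = (\<integral>p. (?b A p - ?a A p) + (?a B p - ?b B p) \<partial>?Q)"
    by (rule Bochner_Integration.integral_cong[OF refl]) (auto simp: A_def B_def indicator_def)
  also have "\<dots> = (\<integral>p. ?b A p \<partial>?Q) - (\<integral>p. ?a A p \<partial>?Q)
      + ((\<integral>p. ?a B p \<partial>?Q) - (\<integral>p. ?b B p \<partial>?Q))"
    using int_ab by simp
  also have "(\<integral>p. ?a B p \<partial>?Q) = (\<integral>p. ?b A p \<partial>?Q)"
    using integral_pair_swap[of "?a B"] by (simp add: swap_B)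
  also have "(\<integral>p. ?b B p \<partial>?Q) = (\<integral>p. ?a A p \<partial>?Q)"
    using integral_pair_swap[of "?b B"] by (simp add: swap_B)
  also have "(\<integral>p. ?a A p \<partial>?Q) = integral\<^sup>L M f - (\<integral>p. ?b A p \<partial>?Q)"
  proof -
    have "(\<integral>p. ?b A p \<partial>?Q) + (\<integral>p. ?b B p \<partial>?Q) = (\<integral>p. ?b A p + ?b B p \<partial>?Q)"
      using int_ab by simp
    also have "\<dots> = (\<integral>p. f (snd p) \<partial>?Q)"
    proof (rule integral_cong_AE)
      show "AE p in ?Q. ?b A p + ?b B p = f (snd p)"
        using ties AE_space by eventually_elim (auto simp: A_def B_def indicator_def)
    qed (measurable, measurable)
    finally show ?thesis
      using integral_pair_swap[of "?b B"] integral_snd by (simp add: swap_B)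
  qed
  finally show ?thesis
    by simp
qed

theorem lemma7:
  fixes PX PY :: "'a measure" and L :: "'a \<Rightarrow> real"
  assumes "prob_space PX" and "prob_space PY"
    and "sets PY = sets PX"
    and "absolutely_continuous PX PY"
    and "L \<in> borel_measurable PX"
    and "\<And>z. z \<in> space PX \<Longrightarrow> 0 \<le> L z"
    and "PY = density PX (\<lambda>z. ennreal (L z))"
    and "\<And>r. measure PX {z \<in> space PX. L z = r} = 0"
  shows "(\<integral>p. \<bar>L (fst p) - L (snd p)\<bar> \<partial>(PX \<Otimes>\<^sub>M PX))
         = 4 * measure (PX \<Otimes>\<^sub>M PY) {p \<in> space (PX \<Otimes>\<^sub>M PY). theta L (fst p) < theta L (snd p)} - 2"
proof -
  \<comment> \<open>The hypotheses on \<open>sets PY\<close> and absolute continuity follow from the density representation.\<close>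
  interpret X: prob_space PX by fact
  interpret P: pair_sigma_finite PX PX ..
  note L_measurable[measurable] = assms(5)
  define A where "A = {p \<in> space (PX \<Otimes>\<^sub>M PX). L (fst p) < L (snd p)}"
  have L_int: "integrable PX L" and L_one: "integral\<^sup>L PX L = 1"
    using integrable_integral_prob_density[of PX L] assms(2,6,7) by auto
  have ties: "AE p in PX \<Otimes>\<^sub>M PX. L (fst p) \<noteq> L (snd p)"
    using assms(8) by (intro P.AE_pair_neq) (auto simp: X.emeasure_eq_measure)
  have "{p \<in> space (PX \<Otimes>\<^sub>M PY). theta L (fst p) < theta L (snd p)} = A"
    using assms(6,7) by (auto simp: A_def space_pair_measure theta_less_theta_iff)
  moreover have "measure (PX \<Otimes>\<^sub>M PY) A = (\<integral>p. L (snd p) * indicator A p \<partial>(PX \<Otimes>\<^sub>M PX))"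
    unfolding assms(7) using assms(2,6,7) X.sigma_finite_measure_axioms
    by (intro measure_pair_density_snd) (auto simp: A_def prob_space_imp_sigma_finite)
  ultimately show ?thesis
    using X.integral_abs_diff_pair[OF L_int ties] L_one by (simp add: A_def)
qed

end
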